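(* Let $A$ be a finite abelian group of even order and $H$ a subgroup of $A$ such that every element of $H$ is a square in $A$. Then $H$ is a subgroup perfect code of $A$ if and only if $H=\{2a:a\in A\}$.
   Context: $A$ is written additively with identity $0$. An element $x$ of $A$ is a square if $x=2y$ for some $y\in A$; a subset is square-free if it contains no squares. For a square-free $T\subseteq A$, the Cayley sum graph $\mathrm{CayS}(A,T)$ is the simple graph with vertex set $A$ in which distinct $x,y$ are adjacent iff $x+y\in T$. A subset $C$ of the vertex set of a graph is a perfect code if every vertex is at distance at most one from exactly one vertex of $C$. A subgroup $H$ of $A$ is a subgroup perfect code of $A$ if $H$ is a perfect code of $\mathrm{CayS}(A,T)$ for some square-free $T\subseteq A$ (the empty set allowed). *)

theory Defs
  imports Main
begin

text \<open>The ambient finite abelian group A is the (finite) type 'a of class ab_group_add,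
  written additively with identity 0.\<close>

definition is_square :: "'a::ab_group_add \<Rightarrow> bool" where
  "is_square x \<longleftrightarrow> (\<exists>y. x = y + y)"

definition square_free :: "'a::ab_group_add set \<Rightarrow> bool" where
  "square_free T \<longleftrightarrow> (\<forall>x\<in>T. \<not> is_square x)"

definition cays_adj :: "'a::ab_group_add set \<Rightarrow> 'a \<Rightarrow> 'a \<Rightarrow> bool" where
  "cays_adj T x y \<longleftrightarrow> x \<noteq> y \<and> x + y \<in> T"

definition cays_perfect_code :: "'a::ab_group_add set \<Rightarrow> 'a set \<Rightarrow> bool" where
  "cays_perfect_code T C \<longleftrightarrow> (\<forall>v. \<exists>!c. c \<in> C \<and> (c = v \<or> cays_adj T v c))"

definition subgroup_add :: "'a::ab_group_add set \<Rightarrow> bool" where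
  "subgroup_add H \<longleftrightarrow> 0 \<in> H \<and> (\<forall>x\<in>H. \<forall>y\<in>H. x + y \<in> H) \<and> (\<forall>x\<in>H. - x \<in> H)"

definition subgroup_perfect_code :: "'a::ab_group_add set \<Rightarrow> bool" where
  "subgroup_perfect_code H \<longleftrightarrow> subgroup_add H \<and> (\<exists>T. square_free T \<and> cays_perfect_code T H)"

end

theory Submission
  imports Defs
begin

text \<open>Write 2A for the subgroup of squares. If a square-free T admits a perfect code
  H \<subseteq> 2A, then a square v is dominated by some c \<in> H, and v + c is again a square,
  hence not in T; so c = v, i.e. 2A \<subseteq> H. Conversely, every subgroup K is a perfect code
  for T a set of representatives of the nontrivial cosets of K: a vertex v \<notin> K is
  joined to exactly one element of K, namely rep(v) - v, while a vertex of K is joined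
  to none since K + K = K is disjoint from T. For K = 2A this T is square-free.\<close>

lemma subgroup_add_add: "subgroup_add K \<Longrightarrow> x \<in> K \<Longrightarrow> y \<in> K \<Longrightarrow> x + y \<in> K"
  unfolding subgroup_add_def by blast

lemma subgroup_add_diff: "subgroup_add K \<Longrightarrow> x \<in> K \<Longrightarrow> y \<in> K \<Longrightarrow> x - y \<in> K"
  unfolding subgroup_add_def by (metis diff_conv_add_uminus)

definition doubles :: "'a::ab_group_add set" where
  "doubles = {a + a | a. True}"

lemma is_square_iff_mem_doubles: "is_square x \<longleftrightarrow> x \<in> doubles"
  unfolding is_square_def doubles_def by auto

lemma square_free_iff_disjoint_doubles: "square_free T \<longleftrightarrow> T \<inter> doubles = {}"
  unfolding square_free_def is_square_iff_mem_doubles by auto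

lemma subgroup_add_doubles: "subgroup_add doubles"
  unfolding subgroup_add_def doubles_def
proof (intro conjI ballI)
  show "(0::'a) \<in> {a + a | a. True}" by (rule CollectI, rule exI[of _ 0]) simp
next
  fix x y :: 'a assume "x \<in> {a + a | a. True}" "y \<in> {a + a | a. True}"
  then obtain a b where "x = a + a" "y = b + b" by blast
  then have "x + y = (a + b) + (a + b)" by (simp add: algebra_simps)
  then show "x + y \<in> {a + a | a. True}" by blast
next
  fix x :: 'a assume "x \<in> {a + a | a. True}"
  then obtain a where "x = a + a" by blast
  then have "- x = (- a) + (- a)" by simp
  then show "- x \<in> {a + a | a. True}" by blast
qed

lemma doubles_subset_perfect_code:
  assumes "square_free T" and "cays_perfect_code T C" and "C \<subseteq> doubles"
  shows "doubles \<subseteq> C"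
proof
  fix v :: 'a assume v: "v \<in> doubles"
  from assms(2) obtain c where c: "c \<in> C" "c = v \<or> cays_adj T v c"
    unfolding cays_perfect_code_def by blast
  have "v + c \<in> doubles"
    using subgroup_add_add[OF subgroup_add_doubles v] c(1) assms(3) by blast
  then have "v + c \<notin> T"
    using assms(1) unfolding square_free_iff_disjoint_doubles by blast
  then show "v \<in> C" using c unfolding cays_adj_def by auto
qed

definition coset_rep :: "'a::ab_group_add set \<Rightarrow> 'a \<Rightarrow> 'a" where
  "coset_rep K x = (SOME y. y - x \<in> K)"

definition nontrivial_coset_reps :: "'a::ab_group_add set \<Rightarrow> 'a set" where
  "nontrivial_coset_reps K = {x. x \<notin> K \<and> coset_rep K x = x}"

lemma coset_rep_diff_mem:
  assumes "subgroup_add K"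
  shows "coset_rep K x - x \<in> K"
proof -
  have "x - x \<in> K" using assms unfolding subgroup_add_def by simp
  then show ?thesis unfolding coset_rep_def by (rule someI)
qed

lemma coset_rep_eq:
  assumes "subgroup_add K" and "x - x' \<in> K"
  shows "coset_rep K x = coset_rep K x'"
proof -
  have "y - x \<in> K \<longleftrightarrow> y - x' \<in> K" for y
  proof
    assume "y - x \<in> K"
    from subgroup_add_add[OF assms(1) this assms(2)] show "y - x' \<in> K" by simp
  next
    assume "y - x' \<in> K"
    from subgroup_add_diff[OF assms(1) this assms(2)] show "y - x \<in> K" by simp
  qed
  then show ?thesis unfolding coset_rep_def by simp
qed

lemma coset_rep_idem: "subgroup_add K \<Longrightarrow> coset_rep K (coset_rep K x) = coset_rep K x"
  by (rule coset_rep_eq, assumption, rule coset_rep_diff_mem)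

lemma nontrivial_coset_reps_disjoint: "nontrivial_coset_reps K \<inter> K = {}"
  unfolding nontrivial_coset_reps_def by blast

lemma add_mem_nontrivial_coset_reps_iff:
  assumes K: "subgroup_add K" and "v \<notin> K" and "c \<in> K"
  shows "v + c \<in> nontrivial_coset_reps K \<longleftrightarrow> c = coset_rep K v - v"
proof -
  have "v + c \<notin> K" using assms subgroup_add_diff[OF K, of "v + c" c] by auto
  moreover have "coset_rep K (v + c) = coset_rep K v"
    using coset_rep_eq[OF K, of "v + c" v] \<open>c \<in> K\<close> by simp
  ultimately show ?thesis
    unfolding nontrivial_coset_reps_def by auto
qed

lemma cays_perfect_code_subgroup:
  assumes K: "subgroup_add K"
  shows "cays_perfect_code (nontrivial_coset_reps K) K"
  unfolding cays_perfect_code_def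
proof
  fix v :: 'a
  let ?T = "nontrivial_coset_reps K"
  show "\<exists>!c. c \<in> K \<and> (c = v \<or> cays_adj ?T v c)"
  proof (cases "v \<in> K")
    case True
    have "v + c \<notin> ?T" if "c \<in> K" for c
      using subgroup_add_add[OF K True that] nontrivial_coset_reps_disjoint by blast
    then show ?thesis using True unfolding cays_adj_def by (intro ex1I[of _ v]) auto
  next
    case False
    have "c = v \<or> cays_adj ?T v c \<longleftrightarrow> c = coset_rep K v - v" if "c \<in> K" for c
      using False that add_mem_nontrivial_coset_reps_iff[OF K False that]
      unfolding cays_adj_def by blast
    with coset_rep_diff_mem[OF K, of v] show ?thesis
      by (intro ex1I[of _ "coset_rep K v - v"]) auto
  qed
qed

lemma subgroup_perfect_code_doubles: "subgroup_perfect_code doubles"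
  unfolding subgroup_perfect_code_def
proof (intro conjI exI)
  show "subgroup_add doubles" by (rule subgroup_add_doubles)
  show "square_free (nontrivial_coset_reps doubles)"
    unfolding square_free_iff_disjoint_doubles by (rule nontrivial_coset_reps_disjoint)
  show "cays_perfect_code (nontrivial_coset_reps doubles) doubles"
    by (rule cays_perfect_code_subgroup[OF subgroup_add_doubles])
qed

theorem lemma3p5:
  fixes H :: "'a::{ab_group_add, finite} set"
  assumes "even (card (UNIV :: 'a set))"
    and "subgroup_add H"
    and "\<forall>h\<in>H. is_square h"
  shows "subgroup_perfect_code H \<longleftrightarrow> H = {a + a | a. True}"
  unfolding doubles_def[symmetric]
proof
  have H_doubles: "H \<subseteq> doubles"
    using assms(3) is_square_iff_mem_doubles by blast
  assume "subgroup_perfect_code H"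
  then obtain T where "square_free T" and "cays_perfect_code T H"
    unfolding subgroup_perfect_code_def by blast
  then have "doubles \<subseteq> H" using H_doubles by (rule doubles_subset_perfect_code)
  then show "H = doubles" using H_doubles by blast
next
  assume "H = doubles"
  then show "subgroup_perfect_code H" using subgroup_perfect_code_doubles by simp
qed

end
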